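(* Fix $y_0\in Y$ and suppose an optimal solution $(\bar\psi,\bar\eta)$ of the dual problem exists. Let $(y(\cdot),u(\cdot))$ be an admissible process on $\{0,1,\dots\}$ with $y(0)=y_0$, and suppose that for all $t=0,1,\dots$: $$k(y(t),u(t))-\bar\psi(y(t))+\bar\eta(f(y(t),u(t)))-\bar\eta(y(t))=V(y_0)-\bar\psi(y_0),\qquad\bar\psi(y(t))=\bar\psi(y_0).$$ Then $u(\cdot)$ is optimal in the long-run average problem, i.e. $$\liminf_{T\to\infty}\frac1T\sum_{t=0}^{T-1}k(y(t),u(t))=\inf_{u'\in\mathcal U(y_0)}\liminf_{T\to\infty}\frac1T\sum_{t=0}^{T-1}k(y'(t),u'(t)),$$ where $y'$ denotes the trajectory generated by $u'$.
   Context: Let $Y\subset\mathbb{R}^m$ be nonempty compact, $U_0$ a compact metric space, $U(\cdot):Y\rightsquigarrow U_0$ upper semicontinuous and compact-valued, and $f:\mathbb{R}^m\times U_0\to\mathbb{R}^m$, $k:\mathbb{R}^m\times U_0\to\mathbb{R}$ continuous. Put $A(y):=\{u\in U(y): f(y,u)\in Y\}$ and $G:=\{(y,u):y\in Y,\ u\in A(y)\}$. Standing assumption: $A(y)\ne\emptyset$ for all $y\in Y$. An admissible process from $y_0$ on $\{0,\dots,T-1\}$ (respectively on $\{0,1,\dots\}$) is a pair $(y(t),u(t))$ with $y(0)=y_0$, $u(t)\in A(y(t))$ and $y(t+1)=f(y(t),u(t))$. The controls form $\mathcal U_T(y_0)$ (respectively $\mathcal U(y_0)$). Define $V_T(y_0):=\frac1T\min_{u\in\mathcal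 U_T(y_0)}\sum_{t=0}^{T-1}k(y(t),u(t))$. Standing assumption of this result: for every $y\in Y$ the limit $V(y):=\lim_{T\to\infty}V_T(y)$ exists, and $V$ is continuous on $Y$. Dual problem: $d^*(y_0):=\sup\mu$, where the supremum is over triples $(\mu,\psi,\eta)\in\mathbb{R}\times C(Y)\times C(Y)$ with, for all $(y,u)\in G$: $$k(y,u)+\psi(y_0)-\psi(y)+\eta(f(y,u))-\eta(y)-\mu\ge0,\qquad\psi(f(y,u))-\psi(y)\ge0.$$ An optimal solution of the dual problem is a pair $(\bar\psi,\bar\eta)\in C(Y)\times C(Y)$ with, for all $(y,u)\in G$: $$k(y,u)+\bar\psi(y_0)-\bar\psi(y)+\bar\eta(f(y,u))-\bar\eta(y)\ge d^*(y_0),\qquad\bar\psi(f(y,u))-\bar\psi(y)\ge0.$$ *)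

theory Defs
  imports "HOL-Analysis.Analysis"
begin

definition usc_on :: "'a::metric_space set \<Rightarrow> ('a \<Rightarrow> 'b::topological_space set) \<Rightarrow> bool" where
  "usc_on Y U \<longleftrightarrow> (\<forall>y\<in>Y. \<forall>W. open W \<and> U y \<subseteq> W \<longrightarrow>
      (\<exists>\<delta>>0. \<forall>y'\<in>Y. dist y' y < \<delta> \<longrightarrow> U y' \<subseteq> W))"

definition adm_set :: "'a set \<Rightarrow> ('a \<Rightarrow> 'b set) \<Rightarrow> ('a \<Rightarrow> 'b \<Rightarrow> 'a) \<Rightarrow> 'a \<Rightarrow> 'b set" where
  "adm_set Y U f y = {u \<in> U y. f y u \<in> Y}"

definition graphG :: "'a set \<Rightarrow> ('a \<Rightarrow> 'b set) \<Rightarrow> ('a \<Rightarrow> 'b \<Rightarrow> 'a) \<Rightarrow> ('a \<times> 'b) set" where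
  "graphG Y U f = {(y, u). y \<in> Y \<and> u \<in> adm_set Y U f y}"

primrec traj :: "('a \<Rightarrow> 'b \<Rightarrow> 'a) \<Rightarrow> 'a \<Rightarrow> (nat \<Rightarrow> 'b) \<Rightarrow> nat \<Rightarrow> 'a" where
  "traj f y0 u 0 = y0"
| "traj f y0 u (Suc t) = f (traj f y0 u t) (u t)"

definition ctrlsT :: "'a set \<Rightarrow> ('a \<Rightarrow> 'b set) \<Rightarrow> ('a \<Rightarrow> 'b \<Rightarrow> 'a) \<Rightarrow> nat \<Rightarrow> 'a \<Rightarrow> (nat \<Rightarrow> 'b) set" where
  "ctrlsT Y U f T y0 = {u. \<forall>t<T. u t \<in> adm_set Y U f (traj f y0 u t)}"

definition ctrls :: "'a set \<Rightarrow> ('a \<Rightarrow> 'b set) \<Rightarrow> ('a \<Rightarrow> 'b \<Rightarrow> 'a) \<Rightarrow> 'a \<Rightarrow> (nat \<Rightarrow> 'b) set" where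
  "ctrls Y U f y0 = {u. \<forall>t. u t \<in> adm_set Y U f (traj f y0 u t)}"

definition VT :: "'a set \<Rightarrow> ('a \<Rightarrow> 'b set) \<Rightarrow> ('a \<Rightarrow> 'b \<Rightarrow> 'a) \<Rightarrow> ('a \<Rightarrow> 'b \<Rightarrow> real) \<Rightarrow> nat \<Rightarrow> 'a \<Rightarrow> real" where
  "VT Y U f k T y0 = (1 / real T) *
     Inf ((\<lambda>u. \<Sum>t<T. k (traj f y0 u t) (u t)) ` ctrlsT Y U f T y0)"

definition Vlim :: "'a set \<Rightarrow> ('a \<Rightarrow> 'b set) \<Rightarrow> ('a \<Rightarrow> 'b \<Rightarrow> 'a) \<Rightarrow> ('a \<Rightarrow> 'b \<Rightarrow> real) \<Rightarrow> 'a \<Rightarrow> real" where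
  "Vlim Y U f k y = lim (\<lambda>T. VT Y U f k T y)"

definition dual_value :: "'a::topological_space set \<Rightarrow> ('a \<Rightarrow> 'b set) \<Rightarrow> ('a \<Rightarrow> 'b \<Rightarrow> 'a) \<Rightarrow> ('a \<Rightarrow> 'b \<Rightarrow> real) \<Rightarrow> 'a \<Rightarrow> real" where
  "dual_value Y U f k y0 = Sup {\<mu>. \<exists>\<psi> \<eta>. continuous_on Y \<psi> \<and> continuous_on Y \<eta> \<and>
      (\<forall>(y, u)\<in>graphG Y U f.
         k y u + \<psi> y0 - \<psi> y + \<eta> (f y u) - \<eta> y - \<mu> \<ge> 0 \<and> \<psi> (f y u) - \<psi> y \<ge> 0)}"

definition dual_optimal :: "'a::topological_space set \<Rightarrow> ('a \<Rightarrow> 'b set) \<Rightarrow> ('a \<Rightarrow> 'b \<Rightarrow> 'a) \<Rightarrow> ('a \<Rightarrow> 'b \<Rightarrow> real) \<Rightarrow> 'a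
     \<Rightarrow> ('a \<Rightarrow> real) \<Rightarrow> ('a \<Rightarrow> real) \<Rightarrow> bool" where
  "dual_optimal Y U f k y0 \<psi> \<eta> \<longleftrightarrow> continuous_on Y \<psi> \<and> continuous_on Y \<eta> \<and>
      (\<forall>(y, u)\<in>graphG Y U f.
         k y u + \<psi> y0 - \<psi> y + \<eta> (f y u) - \<eta> y \<ge> dual_value Y U f k y0 \<and> \<psi> (f y u) - \<psi> y \<ge> 0)"

definition avg_cost :: "('a \<Rightarrow> 'b \<Rightarrow> 'a) \<Rightarrow> ('a \<Rightarrow> 'b \<Rightarrow> real) \<Rightarrow> 'a \<Rightarrow> (nat \<Rightarrow> 'b) \<Rightarrow> ereal" where
  "avg_cost f k y0 u = liminf (\<lambda>T. ereal ((\<Sum>t<T. k (traj f y0 u t) (u t)) / real T))"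

end

theory Submission
  imports Defs
begin

text \<open>Along the given process the two conditions turn the running cost into
  \<open>V(y\<^sub>0) + \<eta>(y(t)) - \<eta>(y(t+1))\<close>, so its partial sums telescope and, \<open>\<eta>\<close> being bounded on
  the compact set \<open>Y\<close>, its averages converge to \<open>V(y\<^sub>0)\<close>. Conversely, the \<open>T\<close>-step average
  of any admissible control is at least \<open>V\<^sub>T(y\<^sub>0)\<close>, which tends to \<open>V(y\<^sub>0)\<close>.\<close>

lemma ctrls_subset_ctrlsT: "ctrls Y U f y0 \<subseteq> ctrlsT Y U f T y0"
  by (auto simp: ctrls_def ctrlsT_def)

lemma traj_in_Y:
  assumes "y0 \<in> Y" "w \<in> ctrlsT Y U f T y0" "t \<le> T"
  shows "traj f y0 w t \<in> Y"
  using assms(3)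
proof (induction t)
  case 0
  then show ?case using assms(1) by simp
next
  case (Suc t)
  then have "w t \<in> adm_set Y U f (traj f y0 w t)"
    using assms(2) by (simp add: ctrlsT_def)
  then show ?case by (simp add: adm_set_def)
qed

lemma average_tendsto_of_telescoping:
  fixes a g :: "nat \<Rightarrow> real"
  assumes a: "\<And>t. a t = c + g t - g (Suc t)" and g: "bounded (range g)"
  shows "(\<lambda>T. (\<Sum>t<T. a t) / real T) \<longlonglongrightarrow> c"
proof -
  obtain C where C: "\<And>t. \<bar>g t\<bar> \<le> C"
    using g by (auto simp: bounded_iff)
  have sum_a: "(\<Sum>t<T. a t) = real T * c + (g 0 - g T)" for T
    by (induction T) (simp_all add: a algebra_simps)
  have "(\<lambda>T. (g 0 - g T) / real T) \<longlonglongrightarrow> 0"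
  proof (rule Lim_null_comparison)
    have "\<bar>g 0 - g T\<bar> \<le> 2 * C" for T
      using C[of 0] C[of T] by linarith
    then show "\<forall>\<^sub>F T in sequentially. norm ((g 0 - g T) / real T) \<le> 2 * C / real T"
      by (intro always_eventually allI) (simp add: divide_right_mono)
    show "(\<lambda>T. 2 * C / real T) \<longlonglongrightarrow> 0"
      by (rule lim_const_over_n)
  qed
  from tendsto_add[OF tendsto_const this]
  have "(\<lambda>T. c + (g 0 - g T) / real T) \<longlonglongrightarrow> c"
    by simp
  moreover have "\<forall>\<^sub>F T in sequentially. c + (g 0 - g T) / real T = (\<Sum>t<T. a t) / real T"
    using eventually_gt_at_top[of "0::nat"] by eventually_elim (simp add: sum_a field_simps)
  ultimately show ?thesis
    by (rule Lim_transform_eventually)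
qed

lemma VT_le_average:
  assumes "y0 \<in> Y" "w \<in> ctrlsT Y U f T y0" "T > 0"
    and k_lower: "\<And>x v. x \<in> Y \<Longrightarrow> v \<in> adm_set Y U f x \<Longrightarrow> B \<le> k x v"
  shows "VT Y U f k T y0 \<le> (\<Sum>t<T. k (traj f y0 w t) (w t)) / real T"
proof -
  let ?cost = "\<lambda>w. \<Sum>t<T. k (traj f y0 w t) (w t)"
  have "real T * B \<le> ?cost w'" if "w' \<in> ctrlsT Y U f T y0" for w'
  proof -
    have "B \<le> k (traj f y0 w' t) (w' t)" if "t < T" for t
    proof (rule k_lower)
      show "traj f y0 w' t \<in> Y"
        using traj_in_Y[OF \<open>y0 \<in> Y\<close> \<open>w' \<in> ctrlsT Y U f T y0\<close>] \<open>t < T\<close> by simp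
      show "w' t \<in> adm_set Y U f (traj f y0 w' t)"
        using \<open>w' \<in> ctrlsT Y U f T y0\<close> \<open>t < T\<close> by (simp add: ctrlsT_def)
    qed
    then show ?thesis
      using sum_mono[of "{..<T}" "\<lambda>_. B"] by simp
  qed
  then have "bdd_below (?cost ` ctrlsT Y U f T y0)"
    by (intro bdd_belowI[of _ "real T * B"]) auto
  then have "Inf (?cost ` ctrlsT Y U f T y0) \<le> ?cost w"
    using assms(2) by (intro cInf_lower) auto
  then show ?thesis
    using \<open>T > 0\<close> by (simp add: VT_def field_simps)
qed

lemma Vlim_le_avg_cost:
  assumes "y0 \<in> Y" "convergent (\<lambda>T. VT Y U f k T y0)" "w \<in> ctrls Y U f y0"
    and k_lower: "\<And>x v. x \<in> Y \<Longrightarrow> v \<in> adm_set Y U f x \<Longrightarrow> B \<le> k x v"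
  shows "ereal (Vlim Y U f k y0) \<le> avg_cost f k y0 w"
proof -
  have "(\<lambda>T. VT Y U f k T y0) \<longlonglongrightarrow> Vlim Y U f k y0"
    using assms(2) by (simp add: Vlim_def convergent_LIMSEQ_iff)
  then have "ereal (Vlim Y U f k y0) = liminf (\<lambda>T. ereal (VT Y U f k T y0))"
    by (intro lim_imp_Liminf[symmetric]) simp_all
  also have "\<dots> \<le> avg_cost f k y0 w"
    unfolding avg_cost_def
  proof (rule Liminf_mono)
    show "\<forall>\<^sub>F T in sequentially. ereal (VT Y U f k T y0)
            \<le> ereal ((\<Sum>t<T. k (traj f y0 w t) (w t)) / real T)"
      using eventually_gt_at_top[of "0::nat"]
    proof eventually_elim
      case (elim T)
      then show ?case
        using VT_le_average[OF assms(1) subsetD[OF ctrls_subset_ctrlsT assms(3)] elim k_lower]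
        by simp
    qed
  qed
  finally show ?thesis .
qed

lemma cost_bounded_below:
  fixes k :: "'a::metric_space \<Rightarrow> 'b::metric_space \<Rightarrow> real"
  assumes "compact Y" "compact U0" "\<And>x. x \<in> Y \<Longrightarrow> U x \<subseteq> U0"
    and "continuous_on (UNIV \<times> U0) (\<lambda>(x, v). k x v)"
  obtains B where "\<And>x v. x \<in> Y \<Longrightarrow> v \<in> adm_set Y U f x \<Longrightarrow> B \<le> k x v"
proof -
  have "continuous_on (Y \<times> U0) (\<lambda>(x, v). k x v)"
    using assms(4) by (rule continuous_on_subset) auto
  then obtain B where "\<And>z. z \<in> Y \<times> U0 \<Longrightarrow> norm ((\<lambda>(x, v). k x v) z) \<le> B"
    using continuous_on_compact_bound[OF compact_Times[OF assms(1,2)]] by metis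
  then have "- B \<le> k x v" if "x \<in> Y" "v \<in> adm_set Y U f x" for x v
    using that assms(3) by (force simp: adm_set_def)
  then show ?thesis
    using that by blast
qed

lemma optimal_if_average_tendsto_Vlim:
  assumes "y0 \<in> Y" "convergent (\<lambda>T. VT Y U f k T y0)" "u \<in> ctrls Y U f y0"
    and k_lower: "\<And>x v. x \<in> Y \<Longrightarrow> v \<in> adm_set Y U f x \<Longrightarrow> B \<le> k x v"
    and "(\<lambda>T. (\<Sum>t<T. k (traj f y0 u t) (u t)) / real T) \<longlonglongrightarrow> Vlim Y U f k y0"
  shows "avg_cost f k y0 u = (INF u' \<in> ctrls Y U f y0. avg_cost f k y0 u')"
proof (rule antisym)
  show "avg_cost f k y0 u \<le> (INF u' \<in> ctrls Y U f y0. avg_cost f k y0 u')"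
  proof (rule INF_greatest)
    have "avg_cost f k y0 u = ereal (Vlim Y U f k y0)"
      unfolding avg_cost_def using assms(5) by (intro lim_imp_Liminf) simp_all
    then show "avg_cost f k y0 u \<le> avg_cost f k y0 u'" if "u' \<in> ctrls Y U f y0" for u'
      using Vlim_le_avg_cost[OF assms(1,2) that k_lower] by simp
  qed
  show "(INF u' \<in> ctrls Y U f y0. avg_cost f k y0 u') \<le> avg_cost f k y0 u"
    using assms(3) by (rule INF_lower)
qed

theorem proposition4p5:
  fixes Y :: "'a::euclidean_space set"
    and U0 :: "'b::metric_space set"
    and U :: "'a \<Rightarrow> 'b set"
    and f :: "'a \<Rightarrow> 'b \<Rightarrow> 'a"
    and k :: "'a \<Rightarrow> 'b \<Rightarrow> real"
    and y0 :: 'a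
    and \<psi> \<eta> :: "'a \<Rightarrow> real"
    and y :: "nat \<Rightarrow> 'a"
    and u :: "nat \<Rightarrow> 'b"
  assumes Y: "compact Y" "Y \<noteq> {}"
    and U0: "compact U0"
    and U_sub: "\<And>x. x \<in> Y \<Longrightarrow> U x \<subseteq> U0"
    and U_compact: "\<And>x. x \<in> Y \<Longrightarrow> compact (U x)"
    and U_usc: "usc_on Y U"
    and f_cont: "continuous_on (UNIV \<times> U0) (\<lambda>(x, v). f x v)"
    and k_cont: "continuous_on (UNIV \<times> U0) (\<lambda>(x, v). k x v)"
    and A_nonempty: "\<And>x. x \<in> Y \<Longrightarrow> adm_set Y U f x \<noteq> {}"
    and V_conv: "\<And>x. x \<in> Y \<Longrightarrow> convergent (\<lambda>T. VT Y U f k T x)"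
    and V_cont: "continuous_on Y (Vlim Y U f k)"
    and y0: "y0 \<in> Y"
    and opt: "dual_optimal Y U f k y0 \<psi> \<eta>"
    and y_0: "y 0 = y0"
    and u_adm: "\<And>t. u t \<in> adm_set Y U f (y t)"
    and y_step: "\<And>t. y (Suc t) = f (y t) (u t)"
    and cond1: "\<And>t. k (y t) (u t) - \<psi> (y t) + \<eta> (f (y t) (u t)) - \<eta> (y t)
                    = Vlim Y U f k y0 - \<psi> y0"
    and cond2: "\<And>t. \<psi> (y t) = \<psi> y0"
  shows "liminf (\<lambda>T. ereal ((\<Sum>t<T. k (y t) (u t)) / real T))
         = (INF u' \<in> ctrls Y U f y0. avg_cost f k y0 u')"
proof -
  have traj_eq: "traj f y0 u = y"
  proof
    show "traj f y0 u t = y t" for t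
      by (induction t) (simp_all add: y_0 y_step)
  qed
  have u_ctrl: "u \<in> ctrls Y U f y0"
    using u_adm by (simp add: ctrls_def traj_eq)
  have "range (\<lambda>t. \<eta> (y t)) \<subseteq> \<eta> ` Y"
    using traj_in_Y[OF y0 subsetD[OF ctrls_subset_ctrlsT u_ctrl]] by (auto simp: traj_eq)
  moreover have "bounded (\<eta> ` Y)"
    using opt Y(1) by (simp add: dual_optimal_def compact_imp_bounded compact_continuous_image)
  ultimately have "bounded (range (\<lambda>t. \<eta> (y t)))"
    using bounded_subset by blast
  moreover have "k (y t) (u t) = Vlim Y U f k y0 + \<eta> (y t) - \<eta> (y (Suc t))" for t
    using cond1[of t] cond2[of t] y_step[of t] by simp
  ultimately have "(\<lambda>T. (\<Sum>t<T. k (y t) (u t)) / real T) \<longlonglongrightarrow> Vlim Y U f k y0"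
    by (intro average_tendsto_of_telescoping)
  moreover obtain B where "\<And>x v. x \<in> Y \<Longrightarrow> v \<in> adm_set Y U f x \<Longrightarrow> B \<le> k x v"
    using cost_bounded_below[where U = U and f = f, OF Y(1) U0 U_sub k_cont] by blast
  ultimately have "avg_cost f k y0 u = (INF u' \<in> ctrls Y U f y0. avg_cost f k y0 u')"
    by (intro optimal_if_average_tendsto_Vlim[OF y0 V_conv[OF y0] u_ctrl]) (simp_all add: traj_eq)
  then show ?thesis
    by (simp add: avg_cost_def traj_eq)
qed

end
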